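(* Let $G_3$ be the graph with vertices $v_1,\dots,v_8$ and edges $a_1=v_1v_2$, $a_2=v_2v_3$, $a_3=v_3v_4$, $a_4=v_4v_5$, $a_5=v_1v_5$, $a_6=v_1v_8$, $a_7=v_2v_6$, $a_8=v_3v_6$, $a_9=v_4v_7$, $a_{10}=v_5v_8$, $a_{11}=v_6v_7$, $a_{12}=v_7v_8$. Let $\gamma_1=e_1+e_3+e_{10}+e_{11}$, $\gamma_2=e_2+e_4+e_6+e_{11}$, $\gamma_3=e_3+e_5+e_7+e_{12}$, $\gamma_4=e_2+e_5+e_6+e_7+e_8+2e_9+e_{10}$, $\gamma_5=e_2+e_3+e_5+e_6+e_7+e_9+e_{10}+e_{11}$ in $\mathbb{R}^{12}$. Then any $\gamma\in S_{\mathbb{R}}(G_3)$ can be uniquely written as $\gamma=k_1\gamma_1+k_2\gamma_2+k_3\gamma_3+k_4\gamma_4+k_5\gamma_5$ with $k_1,\dots,k_5\in\mathbb{R}$. Moreover, $\gamma\in S(G_3)$ if and only if each of the numbers $k_1,\ k_2,\ k_3,\ k_4,\ k_1+k_2+k_5,\ k_1+k_3+k_5,\ k_1+k_4+k_5,\ k_2+k_4+k_5,\ k_3+k_4+k_5,\ 2k_4+k_5$ belongs to $\mathbb{N}$. Consequently, for $\gamma\in S(G_3)$ one has $k_5\in\mathbb{Z}$.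
   Context: For a finite graph $G$ with edges $a_1,\dots,a_n$, $S_{\mathbb{R}}(G)$ is the set of vectors $(\alpha_1,\dots,\alpha_n)\in\mathbb{R}^n$ (real labels $\alpha_i$ on edges $a_i$) such that for every vertex $v$ the sum of the labels of the edges incident to $v$ is the same number $s$ for all vertices; it is a real vector space. A magic labelling is an element of $S(G)=S_{\mathbb{R}}(G)\cap\mathbb{N}^n$. $e_i$ is the $i$-th unit vector of $\mathbb{R}^n$, $\mathbb{N}=\{0,1,2,\dots\}$. *)

theory Defs
  imports Complex_Main "HOL-Library.Function_Algebras"
begin

text \<open>A finite graph with edges a_1..a_n is given by its vertex set V and the map
  ends i = set of endpoints of edge a_i (i in 1..n). Vectors of R^n are
  functions nat => real vanishing outside {1..n}.\<close>

definition S_R :: "nat set \<Rightarrow> nat \<Rightarrow> (nat \<Rightarrow> nat set) \<Rightarrow> (nat \<Rightarrow> real) set" where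
  "S_R V n ends = {\<alpha>. (\<forall>i. i \<notin> {1..n} \<longrightarrow> \<alpha> i = 0) \<and>
     (\<exists>s. \<forall>v\<in>V. (\<Sum>i\<in>{i\<in>{1..n}. v \<in> ends i}. \<alpha> i) = s)}"

definition S_N :: "nat set \<Rightarrow> nat \<Rightarrow> (nat \<Rightarrow> nat set) \<Rightarrow> (nat \<Rightarrow> real) set" where
  "S_N V n ends = S_R V n ends \<inter> {\<alpha>. \<forall>i\<in>{1..n}. \<alpha> i \<in> \<nat>}"

definition unitv :: "nat \<Rightarrow> nat \<Rightarrow> real" ("e") where
  "unitv i = (\<lambda>j. if j = i then 1 else 0)"

definition G3V :: "nat set" where "G3V = {1..8}"

definition G3ends :: "nat \<Rightarrow> nat set" where
  "G3ends i = (if i = 1 then {1,2} else if i = 2 then {2,3} else if i = 3 then {3,4}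
    else if i = 4 then {4,5} else if i = 5 then {1,5} else if i = 6 then {1,8}
    else if i = 7 then {2,6} else if i = 8 then {3,6} else if i = 9 then {4,7}
    else if i = 10 then {5,8} else if i = 11 then {6,7} else if i = 12 then {7,8} else {})"

definition gam1 :: "nat \<Rightarrow> real" where "gam1 = e 1 + e 3 + e 10 + e 11"
definition gam2 :: "nat \<Rightarrow> real" where "gam2 = e 2 + e 4 + e 6 + e 11"
definition gam3 :: "nat \<Rightarrow> real" where "gam3 = e 3 + e 5 + e 7 + e 12"
definition gam4 :: "nat \<Rightarrow> real" where
  "gam4 = e 2 + e 5 + e 6 + e 7 + e 8 + (\<lambda>j. 2 * e 9 j) + e 10"
definition gam5 :: "nat \<Rightarrow> real" where
  "gam5 = e 2 + e 3 + e 5 + e 6 + e 7 + e 9 + e 10 + e 11"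

definition comb :: "real \<Rightarrow> real \<Rightarrow> real \<Rightarrow> real \<Rightarrow> real \<Rightarrow> nat \<Rightarrow> real" where
  "comb k1 k2 k3 k4 k5 = (\<lambda>j. k1 * gam1 j + k2 * gam2 j + k3 * gam3 j + k4 * gam4 j + k5 * gam5 j)"

end

theory Submission
  imports Defs
begin

text \<open>Reading off the entries of k1*gam1 + ... + k5*gam5 edge by edge gives exactly the ten
  numbers of the theorem (some twice), and this combination always balances at every vertex.
  Conversely, the entries on a1, a4, a12, a8 and a9 are k1, k2, k3, k4 and 2*k4 + k5, so these
  five coordinates determine k uniquely; and for a labelling in S_R(G3), solving the seven
  vertex-balance equations expresses the remaining seven entries through those five, so every
  labelling is such a combination. Integrality of k5 then follows from k5 = (2*k4 + k5) - 2*k4.\<close>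

lemma atLeastAtMost_1_12_eq: "{1..12::nat} = {1,2,3,4,5,6,7,8,9,10,11,12}"
  by (rule set_eqI) (simp, presburger)

lemma G3_incident_edges:
  "{i\<in>{1..12}. 1 \<in> G3ends i} = {1,5,6}"
  "{i\<in>{1..12}. 2 \<in> G3ends i} = {1,2,7}"
  "{i\<in>{1..12}. 3 \<in> G3ends i} = {2,3,8}"
  "{i\<in>{1..12}. 4 \<in> G3ends i} = {3,4,9}"
  "{i\<in>{1..12}. 5 \<in> G3ends i} = {4,5,10}"
  "{i\<in>{1..12}. 6 \<in> G3ends i} = {7,8,11}"
  "{i\<in>{1..12}. 7 \<in> G3ends i} = {9,11,12}"
  "{i\<in>{1..12}. 8 \<in> G3ends i} = {6,10,12}"
  unfolding atLeastAtMost_1_12_eq by (auto simp: G3ends_def)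

lemma S_R_G3_iff:
  "\<alpha> \<in> S_R G3V 12 G3ends \<longleftrightarrow> (\<forall>i. i \<notin> {1..12} \<longrightarrow> \<alpha> i = 0) \<and>
     (\<exists>s. \<alpha> 1 + \<alpha> 5 + \<alpha> 6 = s \<and> \<alpha> 1 + \<alpha> 2 + \<alpha> 7 = s \<and> \<alpha> 2 + \<alpha> 3 + \<alpha> 8 = s \<and>
          \<alpha> 3 + \<alpha> 4 + \<alpha> 9 = s \<and> \<alpha> 4 + \<alpha> 5 + \<alpha> 10 = s \<and> \<alpha> 7 + \<alpha> 8 + \<alpha> 11 = s \<and>
          \<alpha> 9 + \<alpha> 11 + \<alpha> 12 = s \<and> \<alpha> 6 + \<alpha> 10 + \<alpha> 12 = s)"
proof -
  have G3V_explicit: "G3V = {1,2,3,4,5,6,7,8}"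
    by (auto simp: G3V_def)
  show ?thesis
    unfolding S_R_def G3V_explicit
    by (simp only: mem_Collect_eq ball_simps G3_incident_edges simp_thms) (simp add: add.assoc)
qed

lemma comb_apply:
  "comb k1 k2 k3 k4 k5 j =
    (if j = 1 then k1 else if j = 2 then k2 + k4 + k5 else if j = 3 then k1 + k3 + k5
     else if j = 4 then k2 else if j = 5 then k3 + k4 + k5 else if j = 6 then k2 + k4 + k5
     else if j = 7 then k3 + k4 + k5 else if j = 8 then k4 else if j = 9 then 2 * k4 + k5
     else if j = 10 then k1 + k4 + k5 else if j = 11 then k1 + k2 + k5
     else if j = 12 then k3 else 0)"
  by (simp add: comb_def gam1_def gam2_def gam3_def gam4_def gam5_def unitv_def)

lemma comb_in_S_R: "comb k1 k2 k3 k4 k5 \<in> S_R G3V 12 G3ends"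
  unfolding S_R_G3_iff comb_apply by auto

lemma S_R_G3_eq_comb:
  assumes "\<alpha> \<in> S_R G3V 12 G3ends"
  shows "\<alpha> = comb (\<alpha> 1) (\<alpha> 4) (\<alpha> 12) (\<alpha> 8) (\<alpha> 9 - 2 * \<alpha> 8)"
proof
  from assms obtain s where support: "\<forall>i. i \<notin> {1..12} \<longrightarrow> \<alpha> i = 0"
    and balance: "\<alpha> 1 + \<alpha> 5 + \<alpha> 6 = s" "\<alpha> 1 + \<alpha> 2 + \<alpha> 7 = s" "\<alpha> 2 + \<alpha> 3 + \<alpha> 8 = s"
      "\<alpha> 3 + \<alpha> 4 + \<alpha> 9 = s" "\<alpha> 4 + \<alpha> 5 + \<alpha> 10 = s" "\<alpha> 7 + \<alpha> 8 + \<alpha> 11 = s"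
      "\<alpha> 9 + \<alpha> 11 + \<alpha> 12 = s" "\<alpha> 6 + \<alpha> 10 + \<alpha> 12 = s"
    unfolding S_R_G3_iff by blast
  fix j
  show "\<alpha> j = comb (\<alpha> 1) (\<alpha> 4) (\<alpha> 12) (\<alpha> 8) (\<alpha> 9 - 2 * \<alpha> 8) j"
  proof (cases "j \<in> {1..12}")
    case True
    then have "j \<in> {1,2,3,4,5,6,7,8,9,10,11,12}"
      by (simp only: atLeastAtMost_1_12_eq)
    then show ?thesis
      using balance by (elim insertE emptyE; simp only: comb_apply; simp; linarith)
  next
    case False
    then show ?thesis
      using support by (auto simp: comb_apply)
  qed
qed

lemma comb_inject:
  assumes "comb k1 k2 k3 k4 k5 = comb l1 l2 l3 l4 l5"
  shows "l1 = k1 \<and> l2 = k2 \<and> l3 = k3 \<and> l4 = k4 \<and> l5 = k5"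
proof -
  have "comb k1 k2 k3 k4 k5 j = comb l1 l2 l3 l4 l5 j" for j
    using assms by simp
  from this[of 1] this[of 4] this[of 12] this[of 8] this[of 9] show ?thesis
    by (simp add: comb_apply)
qed

lemma comb_in_S_N_iff:
  "comb k1 k2 k3 k4 k5 \<in> S_N G3V 12 G3ends \<longleftrightarrow>
     k1 \<in> \<nat> \<and> k2 \<in> \<nat> \<and> k3 \<in> \<nat> \<and> k4 \<in> \<nat> \<and> k1 + k2 + k5 \<in> \<nat> \<and>
     k1 + k3 + k5 \<in> \<nat> \<and> k1 + k4 + k5 \<in> \<nat> \<and> k2 + k4 + k5 \<in> \<nat> \<and>
     k3 + k4 + k5 \<in> \<nat> \<and> 2 * k4 + k5 \<in> \<nat>"
  unfolding S_N_def atLeastAtMost_1_12_eq using comb_in_S_R by (auto simp: comb_apply)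

lemma Ints_of_Nats_double_add:
  fixes x y :: "'a :: ring_1"
  assumes "x \<in> \<nat>" and "2 * x + y \<in> \<nat>"
  shows "y \<in> \<int>"
proof -
  have "(2 * x + y) - 2 * x \<in> \<int>"
    using assms Nats_subset_Ints by (intro Ints_diff Ints_mult) auto
  then show ?thesis
    by simp
qed

theorem mainTheorem5:
  shows "(\<forall>\<gamma>\<in>S_R G3V 12 G3ends. \<exists>k1 k2 k3 k4 k5. \<gamma> = comb k1 k2 k3 k4 k5 \<and>
            (\<forall>l1 l2 l3 l4 l5. \<gamma> = comb l1 l2 l3 l4 l5 \<longrightarrow>
               l1 = k1 \<and> l2 = k2 \<and> l3 = k3 \<and> l4 = k4 \<and> l5 = k5))
   \<and> (\<forall>\<gamma>\<in>S_R G3V 12 G3ends. \<forall>k1 k2 k3 k4 k5. \<gamma> = comb k1 k2 k3 k4 k5 \<longrightarrow>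
        (\<gamma> \<in> S_N G3V 12 G3ends \<longleftrightarrow>
          k1 \<in> \<nat> \<and> k2 \<in> \<nat> \<and> k3 \<in> \<nat> \<and> k4 \<in> \<nat> \<and> k1 + k2 + k5 \<in> \<nat> \<and>
          k1 + k3 + k5 \<in> \<nat> \<and> k1 + k4 + k5 \<in> \<nat> \<and> k2 + k4 + k5 \<in> \<nat> \<and>
          k3 + k4 + k5 \<in> \<nat> \<and> 2 * k4 + k5 \<in> \<nat>))
   \<and> (\<forall>\<gamma>\<in>S_N G3V 12 G3ends. \<forall>k1 k2 k3 k4 k5. \<gamma> = comb k1 k2 k3 k4 k5 \<longrightarrow> k5 \<in> \<int>)"
proof (intro conjI ballI allI impI)
  fix \<gamma> assume "\<gamma> \<in> S_R G3V 12 G3ends"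
  then have "\<gamma> = comb (\<gamma> 1) (\<gamma> 4) (\<gamma> 12) (\<gamma> 8) (\<gamma> 9 - 2 * \<gamma> 8)"
    by (rule S_R_G3_eq_comb)
  then show "\<exists>k1 k2 k3 k4 k5. \<gamma> = comb k1 k2 k3 k4 k5 \<and>
      (\<forall>l1 l2 l3 l4 l5. \<gamma> = comb l1 l2 l3 l4 l5 \<longrightarrow>
         l1 = k1 \<and> l2 = k2 \<and> l3 = k3 \<and> l4 = k4 \<and> l5 = k5)"
    using comb_inject by metis
next
  fix \<gamma> k1 k2 k3 k4 k5 assume "\<gamma> = comb k1 k2 k3 k4 k5"
  then show "\<gamma> \<in> S_N G3V 12 G3ends \<longleftrightarrow>
      k1 \<in> \<nat> \<and> k2 \<in> \<nat> \<and> k3 \<in> \<nat> \<and> k4 \<in> \<nat> \<and> k1 + k2 + k5 \<in> \<nat> \<and>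
      k1 + k3 + k5 \<in> \<nat> \<and> k1 + k4 + k5 \<in> \<nat> \<and> k2 + k4 + k5 \<in> \<nat> \<and>
      k3 + k4 + k5 \<in> \<nat> \<and> 2 * k4 + k5 \<in> \<nat>"
    by (simp only: comb_in_S_N_iff)
next
  fix \<gamma> k1 k2 k3 k4 k5
  assume "\<gamma> \<in> S_N G3V 12 G3ends" and "\<gamma> = comb k1 k2 k3 k4 k5"
  then have "k4 \<in> \<nat>" and "2 * k4 + k5 \<in> \<nat>"
    by (simp_all add: comb_in_S_N_iff)
  then show "k5 \<in> \<int>"
    by (rule Ints_of_Nats_double_add)
qed

end
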